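(* Let $a_{01},a_{10}>0$, $a_\triangle=a_{01}+a_{10}$, and let $x_\triangle\ge0$ be a fixed integer (prior swing count). Let $h(k\mid m,\theta)=\binom{m}{k}\theta^k(1-\theta)^{m-k}$, and let $p_H(\theta)=\mathrm{Beta}(\theta\mid a_{01},a_{10})$. Define the conditionally-intrinsic prior $$p^{CI}_H(\theta\mid H_0)=p_H(\theta)\,E_\theta\!\left[\frac{h(x_{01}\mid x_\triangle,1/2)}{\int_0^1h(x_{01}\mid x_\triangle,t)p_H(t)\,dt}\right],$$ the expectation being over $x_{01}\sim h(\cdot\mid x_\triangle,\theta)$. Let observed data consist of integers $0\le n_{01}\le n_\triangle$, and define $m^{Co}_{H_0}(n)=h(n_{01}\mid n_\triangle,1/2)$, $m^{CI}_H(n)=\int_0^1h(n_{01}\mid n_\triangle,\theta)p^{CI}_H(\theta\mid H_0)\,d\theta$ and $BF^{CI}_{H,H_0}(n)=m^{CI}_H(n)/m^{Co}_{H_0}(n)$. Then $$BF^{CI}_{H,H_0}(n)=\sum_{x_{01}=0}^{x_\triangle}\binom{x_\triangle}{x_{01}}\left(\frac12\right)^{x_\triangle}BF^{Co}_{H,H_0}(n\mid x),$$ where $$BF^{Co}_{H,H_0}(n\mid x)=2^{n_\triangle}\,\frac{B\big(a_{01}+x_{01}+n_{01},\,a_\triangle-a_{01}+x_\triangle-x_{01}+n_\triangle-n_{01}\big)}{B\big(a_{01}+x_{01},\,a_\triangle-a_{01}+x_\triangle-x_{01}\big)}.$$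
   Context: $B(A,B)=\int_0^1t^{A-1}(1-t)^{B-1}dt$ is the Beta function and $\mathrm{Beta}(\theta\mid A,B)=\theta^{A-1}(1-\theta)^{B-1}/B(A,B)$ the Beta density. $H$ is the hypothesis $\theta\neq1/2$ and $H_0$ the hypothesis $\theta=1/2$, where $\theta$ is the success probability in the binomial model $h(n_{01}\mid n_\triangle,\theta)$ for the number $n_{01}$ of $0\to1$ swings among $n_\triangle$ total swings in a matched-pair $2\times2$ table. *)

theory Defs
  imports "HOL-Analysis.Analysis"
begin

definition binom_lik :: "nat \<Rightarrow> nat \<Rightarrow> real \<Rightarrow> real" where
  "binom_lik k m \<theta> = real (m choose k) * \<theta> ^ k * (1 - \<theta>) ^ (m - k)"

definition beta_dens :: "real \<Rightarrow> real \<Rightarrow> real \<Rightarrow> real" where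
  "beta_dens A B \<theta> = \<theta> powr (A - 1) * (1 - \<theta>) powr (B - 1) / Beta A B"

definition prior_pred :: "real \<Rightarrow> real \<Rightarrow> nat \<Rightarrow> nat \<Rightarrow> real" where
  "prior_pred a01 a10 xt x01 = integral {0..1} (\<lambda>t. binom_lik x01 xt t * beta_dens a01 a10 t)"

text \<open>Conditionally-intrinsic prior; the expectation over x01 ~ h(. | xt, theta)
  is written out as the finite sum over its support {0..xt}.\<close>
definition pCI :: "real \<Rightarrow> real \<Rightarrow> nat \<Rightarrow> real \<Rightarrow> real" where
  "pCI a01 a10 xt \<theta> = beta_dens a01 a10 \<theta> *
     (\<Sum>x01 = 0..xt. binom_lik x01 xt \<theta> *
        (binom_lik x01 xt (1/2) / prior_pred a01 a10 xt x01))"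

definition m_Co_H0 :: "nat \<Rightarrow> nat \<Rightarrow> real" where
  "m_Co_H0 n01 nt = binom_lik n01 nt (1/2)"

definition m_CI_H :: "real \<Rightarrow> real \<Rightarrow> nat \<Rightarrow> nat \<Rightarrow> nat \<Rightarrow> real" where
  "m_CI_H a01 a10 xt n01 nt = integral {0..1} (\<lambda>\<theta>. binom_lik n01 nt \<theta> * pCI a01 a10 xt \<theta>)"

definition BF_CI :: "real \<Rightarrow> real \<Rightarrow> nat \<Rightarrow> nat \<Rightarrow> nat \<Rightarrow> real" where
  "BF_CI a01 a10 xt n01 nt = m_CI_H a01 a10 xt n01 nt / m_Co_H0 n01 nt"

text \<open>BF^Co(n | x), with a_tri = a01 + a10.\<close>
definition BF_Co :: "real \<Rightarrow> real \<Rightarrow> nat \<Rightarrow> nat \<Rightarrow> nat \<Rightarrow> nat \<Rightarrow> real" where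
  "BF_Co a01 a10 xt x01 n01 nt =
     2 ^ nt * Beta (a01 + real x01 + real n01)
                   ((a01 + a10) - a01 + real xt - real x01 + real nt - real n01)
            / Beta (a01 + real x01) ((a01 + a10) - a01 + real xt - real x01)"

end

theory Submission
  imports Defs
begin

text \<open>Multiplying the two likelihoods of the intrinsic prior and the data gives, up to binomial
  coefficients, a single Beta kernel with the counts added; every integral against the Beta prior
  is then a Beta function.  Expanding the expectation in the intrinsic prior as a finite sum and
  integrating term by term, the normalisation of each term by the prior predictive turns it into
  a posterior-to-prior ratio of Beta functions, which is exactly BF^Co(n | x) weighted by
  h(x | x_tri, 1/2).\<close>

lemma Beta_real_pos: "a > 0 \<Longrightarrow> b > 0 \<Longrightarrow> Beta a b > (0::real)"
  unfolding Beta_def by (simp add: Gamma_real_pos)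

lemma has_integral_Beta_moment:
  fixes a b :: real and k j :: nat
  assumes "a > 0" and "b > 0"
  shows "((\<lambda>t. t ^ k * (1 - t) ^ j * (t powr (a - 1) * (1 - t) powr (b - 1)))
          has_integral Beta (a + real k) (b + real j)) {0..1}"
proof -
  have "((\<lambda>t. t powr (a + real k - 1) * (1 - t) powr (b + real j - 1))
          has_integral Beta (a + real k) (b + real j)) {0<..<1}"
    using has_integral_Beta_real[of "a + real k" "b + real j"] assms
    by (simp add: has_integral_Icc_iff_Ioo)
  moreover have "t ^ k * (1 - t) ^ j * (t powr (a - 1) * (1 - t) powr (b - 1)) =
        t powr (a + real k - 1) * (1 - t) powr (b + real j - 1)" if "t \<in> {0<..<1}" for t :: real
    using that by (simp add: powr_add[symmetric] powr_realpow[symmetric] algebra_simps)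
  ultimately have "((\<lambda>t. t ^ k * (1 - t) ^ j * (t powr (a - 1) * (1 - t) powr (b - 1)))
          has_integral Beta (a + real k) (b + real j)) {0<..<1}"
    by (metis (no_types, lifting) has_integral_eq)
  then show ?thesis by (simp add: has_integral_Icc_iff_Ioo)
qed

lemma has_integral_binom_lik_beta_dens:
  assumes "a > 0" and "b > 0" and "k \<le> m"
  shows "((\<lambda>t. binom_lik k m t * beta_dens a b t) has_integral
          real (m choose k) * Beta (a + real k) (b + real (m - k)) / Beta a b) {0..1}"
proof -
  have "(\<lambda>t. binom_lik k m t * beta_dens a b t) = (\<lambda>t. (real (m choose k) / Beta a b) *
          (t ^ k * (1 - t) ^ (m - k) * (t powr (a - 1) * (1 - t) powr (b - 1))))"
    by (auto simp: binom_lik_def beta_dens_def fun_eq_iff)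
  moreover have "((\<lambda>t. (real (m choose k) / Beta a b) *
          (t ^ k * (1 - t) ^ (m - k) * (t powr (a - 1) * (1 - t) powr (b - 1)))) has_integral
        (real (m choose k) / Beta a b) * Beta (a + real k) (b + real (m - k))) {0..1}"
    by (intro has_integral_mult_right has_integral_Beta_moment assms)
  ultimately show ?thesis by simp
qed

lemma prior_pred_eq_Beta:
  assumes "a > 0" and "b > 0" and "k \<le> m"
  shows "prior_pred a b m k = real (m choose k) * Beta (a + real k) (b + real (m - k)) / Beta a b"
  unfolding prior_pred_def using has_integral_binom_lik_beta_dens[OF assms] by (rule integral_unique)

lemma binom_lik_half: "k \<le> m \<Longrightarrow> binom_lik k m (1/2) = real (m choose k) * (1/2) ^ m"
  unfolding binom_lik_def by (simp add: power_add[symmetric])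

lemma binom_lik_mult:
  assumes "k \<le> m" and "j \<le> n"
  shows "binom_lik k m t * binom_lik j n t =
    real (m choose k) * real (n choose j) / real ((m + n) choose (k + j)) * binom_lik (k + j) (m + n) t"
proof -
  have "m + n - (k + j) = (m - k) + (n - j)" using assms by simp
  then have "binom_lik (k + j) (m + n) t =
      real ((m + n) choose (k + j)) * (t ^ k * (1 - t) ^ (m - k)) * (t ^ j * (1 - t) ^ (n - j))"
    unfolding binom_lik_def by (simp only: power_add ac_simps)
  moreover have "real ((m + n) choose (k + j)) \<noteq> 0" using assms by simp
  ultimately show ?thesis unfolding binom_lik_def by simp
qed

lemma has_integral_binom_lik_mult_beta_dens:
  assumes "a > 0" and "b > 0" and "k \<le> m" and "j \<le> n"
  shows "((\<lambda>t. binom_lik k m t * binom_lik j n t * beta_dens a b t) has_integral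
          real (m choose k) * real (n choose j) *
          Beta (a + real (k + j)) (b + real (m + n - (k + j))) / Beta a b) {0..1}"
proof -
  have "real ((m + n) choose (k + j)) \<noteq> 0" using assms by simp
  then show ?thesis
    using has_integral_mult_right[OF has_integral_binom_lik_beta_dens[OF assms(1,2), of "k + j" "m + n"],
        of "real (m choose k) * real (n choose j) / real ((m + n) choose (k + j))"] assms
    by (simp add: binom_lik_mult mult.assoc)
qed

text \<open>The left-hand side is the x-th term of BF^CI: its intrinsic-prior weight times the
  Beta integral of both likelihoods, over m^Co.\<close>

lemma intrinsic_term_eq_BF_Co:
  assumes a: "a01 > 0" "a10 > 0" and "x \<le> xt" and "n01 \<le> nt"
  shows "binom_lik x xt (1/2) / prior_pred a01 a10 xt x *
      (real (nt choose n01) * real (xt choose x) *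
       Beta (a01 + real (n01 + x)) (a10 + real (nt + xt - (n01 + x))) / Beta a01 a10) /
      m_Co_H0 n01 nt =
    real (xt choose x) * (1/2) ^ xt * BF_Co a01 a10 xt x n01 nt"
proof -
  have "Beta a01 a10 > 0" "Beta (a01 + real x) (a10 + real (xt - x)) > 0"
    using a by (auto intro!: Beta_real_pos)
  moreover have "real (nt choose n01) > 0" "real (xt choose x) > 0"
    using assms by auto
  moreover have "a10 + real (nt + xt - (n01 + x)) =
      a01 + a10 - a01 + real xt - real x + real nt - real n01"
    "a10 + real (xt - x) = a01 + a10 - a01 + real xt - real x"
    using assms by (simp_all add: of_nat_diff)
  ultimately show ?thesis
    unfolding BF_Co_def m_Co_H0_def prior_pred_eq_Beta[OF a \<open>x \<le> xt\<close>]
      binom_lik_half[OF \<open>x \<le> xt\<close>] binom_lik_half[OF \<open>n01 \<le> nt\<close>]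
    by (simp add: field_simps power_one_over)
qed

theorem proposition6:
  fixes a01 a10 :: real and xt n01 nt :: nat
  assumes "a01 > 0" and "a10 > 0" and "n01 \<le> nt"
  shows "BF_CI a01 a10 xt n01 nt =
    (\<Sum>x01 = 0..xt. real (xt choose x01) * (1/2) ^ xt * BF_Co a01 a10 xt x01 n01 nt)"
proof -
  define w where "w x = binom_lik x xt (1/2) / prior_pred a01 a10 xt x" for x
  define I where "I x = real (nt choose n01) * real (xt choose x) *
      Beta (a01 + real (n01 + x)) (a10 + real (nt + xt - (n01 + x))) / Beta a01 a10" for x
  have "binom_lik n01 nt t * pCI a01 a10 xt t =
      (\<Sum>x = 0..xt. w x * (binom_lik n01 nt t * binom_lik x xt t * beta_dens a01 a10 t))" for t
    unfolding pCI_def w_def sum_distrib_left by (rule sum.cong) simp_all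
  moreover have "((\<lambda>t. \<Sum>x = 0..xt. w x * (binom_lik n01 nt t * binom_lik x xt t * beta_dens a01 a10 t))
      has_integral (\<Sum>x = 0..xt. w x * I x)) {0..1}"
    unfolding I_def
    by (intro has_integral_sum has_integral_mult_right has_integral_binom_lik_mult_beta_dens assms) auto
  ultimately have "m_CI_H a01 a10 xt n01 nt = (\<Sum>x = 0..xt. w x * I x)"
    unfolding m_CI_H_def by (simp add: integral_unique)
  then have "BF_CI a01 a10 xt n01 nt = (\<Sum>x = 0..xt. w x * I x / m_Co_H0 n01 nt)"
    unfolding BF_CI_def by (simp add: sum_divide_distrib)
  also have "\<dots> = (\<Sum>x01 = 0..xt. real (xt choose x01) * (1/2) ^ xt * BF_Co a01 a10 xt x01 n01 nt)"
    unfolding w_def I_def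
    using intrinsic_term_eq_BF_Co[OF assms(1,2) _ assms(3)] by (intro sum.cong) auto
  finally show ?thesis .
qed

end
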